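(* Let $k\in\mathbb N$, $E\subseteq W(A)$ and $\vec s=(s_n(x))_{n=0}^\infty\in V^\infty(A)$ such that $E$ is $k$-large in $\vec s$. Then there exist $m\in\mathbb N$ and $w(x)\in\langle (s_n(x))_{n=0}^m\,\|\,(A_{k+n})_{n=0}^m\rangle_v$ such that $\{w(a):a\in A_k\}\subseteq E$.
   Context: $\mathbb N=\{0,1,2,\dots\}$. Fix an increasing sequence $A_0\subseteq A_1\subseteq A_2\subseteq\cdots$ of finite nonempty alphabets and set $A=\bigcup_{n\in\mathbb N}A_n$. $W(A)$ denotes the set of all finite words over $A$, including the empty word; words are concatenated by juxtaposition. Fix a symbol $x\notin A$. A variable word over $A$ is a finite word over $A\cup\{x\}$ in which $x$ occurs at least once; $V(A)$ is the set of variable words. For $s(x)\in V(A)$ and $a\in A\cup\{x\}$, $s(a)$ is obtained by replacing every occurrence of $x$ by $a$. $V^\infty(A)$ is the set of infinite sequences of variable words. For a sequence $(s_n(x))_{n\in I}$ of variable words and a sequence $(B_n)_{n\in I}$ of finite subsets of $A$, both indexed by a set $I\subseteq\mathbb N$ that is either a finite interval or of the form $\{m,m+1,\dots\}$: the constant span $\langle (s_n(x))_{n\in I}\,\|\,(B_n)_{n\in I}\rangle_c$ is the set of all words $s_{l_0}(a_0)s_{l_1}(a_1)\cdots s_{l_j}(a_j)$ with $j\ge0$, $l_0<\dots<l_j$ in $I$ and $a_i\in B_{l_i}$ for each $i$; the variable span $\langle (s_n(x))_{n\in I}\,\|\,(B_n)_{n\in I}\rangle_v$ is the set of all words $s_{l_0}(a_0)\cdots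 s_{l_j}(a_j)$ with $j\ge0$, $l_0<\dots<l_j$ in $I$, $a_i\in B_{l_i}\cup\{x\}$ for each $i$, and at least one $a_i=x$. (E.g. $(A_{k+n})_{n=p}^{q}$ denotes the sequence $B_n=A_{k+n}$, $p\le n\le q$.) Extracted $k$-subsequences: let $k\in\mathbb N$ and $\vec s=(s_n(x))_{n=0}^\infty\in V^\infty(A)$. A finite sequence $(t_n(x))_{n=0}^l$ of variable words is an extracted $k$-subsequence of $\vec s$ if there exist integers $0=m_0<m_1<\dots<m_{l+1}$ with $t_i(x)\in\langle (s_n(x))_{n=m_i}^{m_{i+1}-1}\,\|\,(A_{k+n})_{n=m_i}^{m_{i+1}-1}\rangle_v$ for all $0\le i\le l$. An infinite sequence $\vec t=(t_n(x))_{n=0}^\infty$ is an extracted $k$-subsequence of $\vec s$ if each initial segment $(t_n(x))_{n=0}^l$ is a finite extracted $k$-subsequence of $\vec s$. We write $\vec t\le_k\vec s$. A set $E\subseteq W(A)$ is $k$-large in $\vec s\in V^\infty(A)$ if $E\cap\langle\vec w\,\|\,(A_{k+n})_{n=0}^\infty\rangle_c\neq\emptyset$ for every $\vec w\in V^\infty(A)$ with $\vec w\le_k\vec s$. *)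

theory Defs
  imports Main
begin

text \<open>Alphabets: A :: nat => 'a set. The letters are elements of 'a; the variable
  symbol x is represented by None, a letter a by Some a, so variable words are
  lists over 'a option.\<close>

definition alphabet :: "(nat \<Rightarrow> 'a set) \<Rightarrow> 'a set" where
  "alphabet A = (\<Union>n. A n)"

definition words :: "(nat \<Rightarrow> 'a set) \<Rightarrow> 'a list set" where
  "words A = lists (alphabet A)"

definition is_varword :: "(nat \<Rightarrow> 'a set) \<Rightarrow> 'a option list \<Rightarrow> bool" where
  "is_varword A w \<longleftrightarrow> None \<in> set w \<and> (\<forall>a. Some a \<in> set w \<longrightarrow> a \<in> alphabet A)"

definition is_varseq :: "(nat \<Rightarrow> 'a set) \<Rightarrow> (nat \<Rightarrow> 'a option list) \<Rightarrow> bool" where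
  "is_varseq A s \<longleftrightarrow> (\<forall>n. is_varword A (s n))"

definition subst_c :: "'a option list \<Rightarrow> 'a \<Rightarrow> 'a list" where
  "subst_c w a = map (\<lambda>c. case c of None \<Rightarrow> a | Some b \<Rightarrow> b) w"

definition subst_v :: "'a option list \<Rightarrow> 'a option \<Rightarrow> 'a option list" where
  "subst_v w b = map (\<lambda>c. case c of None \<Rightarrow> b | Some a \<Rightarrow> Some a) w"

definition cspan :: "(nat \<Rightarrow> 'a option list) \<Rightarrow> (nat \<Rightarrow> 'a set) \<Rightarrow> nat set \<Rightarrow> 'a list set" where
  "cspan s B I = {concat (map (\<lambda>(l, a). subst_c (s l) a) ps) | ps.
      ps \<noteq> [] \<and> sorted_wrt (<) (map fst ps) \<and> (\<forall>(l, a)\<in>set ps. l \<in> I \<and> a \<in> B l)}"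

definition vspan :: "(nat \<Rightarrow> 'a option list) \<Rightarrow> (nat \<Rightarrow> 'a set) \<Rightarrow> nat set \<Rightarrow> 'a option list set" where
  "vspan s B I = {concat (map (\<lambda>(l, a). subst_v (s l) a) ps) | ps.
      ps \<noteq> [] \<and> sorted_wrt (<) (map fst ps) \<and>
      (\<forall>(l, a)\<in>set ps. l \<in> I \<and> a \<in> insert None (Some ` B l)) \<and>
      (\<exists>l. (l, None) \<in> set ps)}"

text \<open>t \<le>_k s: every initial segment (t_0..t_l) is an extracted k-subsequence.\<close>
definition extracted :: "(nat \<Rightarrow> 'a set) \<Rightarrow> nat \<Rightarrow> (nat \<Rightarrow> 'a option list) \<Rightarrow> (nat \<Rightarrow> 'a option list) \<Rightarrow> bool" where
  "extracted A k t s \<longleftrightarrow>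
     (\<forall>l. \<exists>m :: nat \<Rightarrow> nat. m 0 = 0 \<and> (\<forall>i\<le>l. m i < m (Suc i)) \<and>
        (\<forall>i\<le>l. t i \<in> vspan s (\<lambda>n. A (k + n)) {m i..<m (Suc i)}))"

definition k_large :: "(nat \<Rightarrow> 'a set) \<Rightarrow> nat \<Rightarrow> 'a list set \<Rightarrow> (nat \<Rightarrow> 'a option list) \<Rightarrow> bool" where
  "k_large A k E s \<longleftrightarrow>
     (\<forall>w. is_varseq A w \<and> extracted A k w s \<longrightarrow> E \<inter> cspan w (\<lambda>n. A (k + n)) UNIV \<noteq> {})"

end

theory Submission
  imports Defs "HOL-Library.FuncSet"
begin

(*
  Suppose, to the contrary, that no variable word w of an initial variable span of s has
  all its instances w(a), a in A_k, in E.  Then one can build variable words w_0, w_1, ...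
  from consecutive blocks of s such that no word p w_n(a) lies in E, where p ranges over
  the constant words on the earlier blocks and a over A_{k + m_n}.  Each w_n comes from the
  Hales-Jewett theorem: colour d in A_k^N by the set of pairs (p, a) with
  p s_m(a) s_{m+1}(d_0) ... s_{m+N}(d_{N-1}) in E.  If v is a monochromatic line and
  p s_m(a) v(b) lies in E for one b, then it does for every b, so the variable word
  p s_m(a) v(x) contradicts the assumption; hence w_n = s_m(x) v(b) avoids E.  The w_n form
  an extracted k-subsequence of s whose constant span misses E, so E is not k-large.
*)

lemma subst_c_append [simp]: "subst_c (xs @ ys) a = subst_c xs a @ subst_c ys a"
  by (simp add: subst_c_def)

lemma subst_c_map_Some [simp]: "subst_c (map Some xs) a = xs"
  by (induct xs) (auto simp: subst_c_def)

lemma length_subst_c [simp]: "length (subst_c l a) = length l"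
  by (simp add: subst_c_def)

lemma subst_c_Cons [simp]: "subst_c (c # w) a = (case c of None \<Rightarrow> a | Some b \<Rightarrow> b) # subst_c w a"
  by (simp add: subst_c_def)

lemma subst_c_concat: "subst_c (concat ws) a = concat (map (\<lambda>w. subst_c w a) ws)"
  by (simp add: subst_c_def map_concat)

lemma subst_c_subst_v: "subst_c (subst_v w c) a = subst_c w (case c of None \<Rightarrow> a | Some b \<Rightarrow> b)"
  unfolding subst_c_def subst_v_def by (auto split: option.splits)

lemma subst_v_Some: "subst_v w (Some a) = map Some (subst_c w a)"
  unfolding subst_c_def subst_v_def by (auto split: option.splits)

section \<open>The Hales--Jewett theorem\<close>

definition cube :: "'a set \<Rightarrow> nat \<Rightarrow> 'a list set" where
  "cube S N = {w. length w = N \<and> set w \<subseteq> S}"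

definition is_line :: "'a set \<Rightarrow> nat \<Rightarrow> 'a option list \<Rightarrow> bool" where
  "is_line S N l \<longleftrightarrow> length l = N \<and> None \<in> set l \<and> (\<forall>b. Some b \<in> set l \<longrightarrow> b \<in> S)"

definition has_monochromatic_line :: "'a set \<Rightarrow> nat \<Rightarrow> ('a list \<Rightarrow> 'c) \<Rightarrow> bool" where
  "has_monochromatic_line S N \<chi> \<longleftrightarrow>
     (\<exists>l. is_line S N l \<and> (\<forall>a\<in>S. \<forall>b\<in>S. \<chi> (subst_c l a) = \<chi> (subst_c l b)))"

definition hales_jewett :: "'a set \<Rightarrow> 'c set \<Rightarrow> nat \<Rightarrow> bool" where
  "hales_jewett S C N \<longleftrightarrow> (\<forall>\<chi>. (\<forall>w\<in>cube S N. \<chi> w \<in> C) \<longrightarrow> has_monochromatic_line S N \<chi>)"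

lemma subst_c_line_in_cube: "is_line S N l \<Longrightarrow> a \<in> S \<Longrightarrow> subst_c l a \<in> cube S N"
  unfolding is_line_def cube_def subst_c_def by (auto split: option.splits)

lemma cube_append: "x \<in> cube S M \<Longrightarrow> y \<in> cube S N \<Longrightarrow> x @ y \<in> cube S (M + N)"
  unfolding cube_def by auto

lemma finite_cube: "finite S \<Longrightarrow> finite (cube S N)"
  unfolding cube_def by (rule finite_subset[OF _ finite_lists_length_le[of S N]]) auto

lemma hales_jewett_singleton: "hales_jewett {z} C 1"
proof -
  have "is_line {z} 1 [None]" by (simp add: is_line_def)
  then show ?thesis unfolding hales_jewett_def has_monochromatic_line_def by blast
qed

lemma hales_jewett_finite_colours:
  assumes "\<And>c :: nat. \<exists>N. hales_jewett S {..<c} N" and "finite C"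
  shows "\<exists>N. hales_jewett S C N"
proof -
  obtain g where g: "bij_betw g C {0..<card C}" using ex_bij_betw_finite_nat[OF assms(2)] ..
  obtain N where N: "hales_jewett S {..<card C} N" using assms(1) by blast
  have "has_monochromatic_line S N \<chi>" if \<chi>: "\<forall>w\<in>cube S N. \<chi> w \<in> C" for \<chi>
  proof -
    have "\<forall>w\<in>cube S N. (g \<circ> \<chi>) w \<in> {..<card C}"
      using \<chi> bij_betwE[OF g] by simp
    with N have "has_monochromatic_line S N (g \<circ> \<chi>)" unfolding hales_jewett_def by blast
    then obtain l where l: "is_line S N l"
      and eq: "\<forall>a\<in>S. \<forall>b\<in>S. g (\<chi> (subst_c l a)) = g (\<chi> (subst_c l b))"
      unfolding has_monochromatic_line_def by auto
    have inj: "inj_on g C" using bij_betw_imp_inj_on[OF g] .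
    have "\<chi> (subst_c l a) = \<chi> (subst_c l b)" if "a \<in> S" "b \<in> S" for a b
      using inj_onD[OF inj eq[rule_format, OF that]] \<chi> subst_c_line_in_cube[OF l] that by blast
    with l show ?thesis unfolding has_monochromatic_line_def by blast
  qed
  then show ?thesis unfolding hales_jewett_def by blast
qed

lemma has_monochromatic_line_prefix:
  assumes "x \<in> cube S M" and "has_monochromatic_line S N (\<lambda>y. \<chi> (x @ y))"
  shows "has_monochromatic_line S (M + N) \<chi>"
proof -
  from assms(2) obtain l where l: "is_line S N l"
    and eq: "\<forall>a\<in>S. \<forall>b\<in>S. \<chi> (x @ subst_c l a) = \<chi> (x @ subst_c l b)"
    unfolding has_monochromatic_line_def by blast
  have "is_line S (M + N) (map Some x @ l)"
    using assms(1) l unfolding is_line_def cube_def by auto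
  moreover have "\<forall>a\<in>S. \<forall>b\<in>S. \<chi> (subst_c (map Some x @ l) a) = \<chi> (subst_c (map Some x @ l) b)"
    unfolding subst_c_append subst_c_map_Some by (rule eq)
  ultimately show ?thesis unfolding has_monochromatic_line_def by blast
qed

definition focused_lines :: "'a set \<Rightarrow> 'a \<Rightarrow> nat \<Rightarrow> ('a list \<Rightarrow> 'c) \<Rightarrow> 'a list \<Rightarrow> 'c set \<Rightarrow> bool" where
  "focused_lines S z N \<chi> f T \<longleftrightarrow>
     (\<forall>col\<in>T. \<exists>l. is_line (insert z S) N l \<and> subst_c l z = f \<and> (\<forall>a\<in>S. \<chi> (subst_c l a) = col))"

lemma has_monochromatic_line_if_focus_colour:
  assumes "focused_lines S z N \<chi> f T" and "\<chi> f \<in> T"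
  shows "has_monochromatic_line (insert z S) N \<chi>"
proof -
  from assms obtain l where l: "is_line (insert z S) N l" "subst_c l z = f"
    and col: "\<forall>a\<in>S. \<chi> (subst_c l a) = \<chi> f"
    unfolding focused_lines_def by blast
  have "\<chi> (subst_c l a) = \<chi> f" if "a \<in> insert z S" for a
    using that l(2) col by auto
  then have "\<forall>a\<in>insert z S. \<forall>b\<in>insert z S. \<chi> (subst_c l a) = \<chi> (subst_c l b)" by simp
  with l(1) show ?thesis unfolding has_monochromatic_line_def by blast
qed

text \<open>The lines of \<open>L\<close> cannot tell, through \<open>\<chi>\<close>, which letter of \<open>S\<close> fills their
  variable.  So each focused line \<open>l\<close> at \<open>f\<close> gives the focused line \<open>L l\<close> at \<open>L(z) f\<close>, and the
  line \<open>L f\<close> contributes one more colour.\<close>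

lemma focused_lines_extend:
  assumes L: "is_line (insert z S) M L" and a0: "a0 \<in> S"
    and uniform: "\<And>a y. a \<in> S \<Longrightarrow> y \<in> cube (insert z S) N \<Longrightarrow>
                          \<chi> (subst_c L a @ y) = \<chi> (subst_c L a0 @ y)"
    and f: "f \<in> cube (insert z S) N"
    and T: "focused_lines S z N (\<lambda>y. \<chi> (subst_c L a0 @ y)) f T"
  shows "focused_lines S z (M + N) \<chi> (subst_c L z @ f) (insert (\<chi> (subst_c L a0 @ f)) T)"
  unfolding focused_lines_def
proof
  fix col assume "col \<in> insert (\<chi> (subst_c L a0 @ f)) T"
  then consider "col = \<chi> (subst_c L a0 @ f)" | "col \<in> T" by blast
  then show "\<exists>l. is_line (insert z S) (M + N) l \<and> subst_c l z = subst_c L z @ f \<and>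
                 (\<forall>a\<in>S. \<chi> (subst_c l a) = col)"
  proof cases
    case 1
    have "is_line (insert z S) (M + N) (L @ map Some f)"
      using L f unfolding is_line_def cube_def by auto
    moreover have "\<forall>a\<in>S. \<chi> (subst_c (L @ map Some f) a) = col"
      unfolding subst_c_append subst_c_map_Some 1 using uniform[OF _ f] by blast
    ultimately show ?thesis by (intro exI[of _ "L @ map Some f"]) simp
  next
    case 2
    with T obtain l where l: "is_line (insert z S) N l" "subst_c l z = f"
      and col: "\<forall>a\<in>S. \<chi> (subst_c L a0 @ subst_c l a) = col"
      unfolding focused_lines_def by blast
    have "is_line (insert z S) (M + N) (L @ l)"
      using L l(1) unfolding is_line_def by auto
    moreover have "\<chi> (subst_c (L @ l) a) = col" if "a \<in> S" for a
      using that col uniform[OF that subst_c_line_in_cube[OF l(1)]] by simp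
    ultimately show ?thesis using l(2) by (intro exI[of _ "L @ l"]) simp
  qed
qed

lemma line_uniform_on_suffixes:
  assumes "S \<subseteq> T" and HJ: "hales_jewett S (cube T N \<rightarrow>\<^sub>E {..<c}) M"
    and bounded: "\<forall>w\<in>cube T (M + N). \<chi> w < c"
  shows "\<exists>L. is_line S M L \<and>
           (\<forall>a\<in>S. \<forall>b\<in>S. \<forall>y\<in>cube T N. \<chi> (subst_c L a @ y) = \<chi> (subst_c L b @ y))"
proof -
  have "restrict (\<lambda>y. \<chi> (x @ y)) (cube T N) \<in> cube T N \<rightarrow>\<^sub>E {..<c}" if "x \<in> cube S M" for x
  proof -
    have "x \<in> cube T M" using that assms(1) unfolding cube_def by auto
    then show ?thesis using bounded by (auto simp: Pi_iff intro: cube_append)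
  qed
  then have "has_monochromatic_line S M (\<lambda>x. restrict (\<lambda>y. \<chi> (x @ y)) (cube T N))"
    using HJ[unfolded hales_jewett_def, rule_format, of "\<lambda>x. restrict (\<lambda>y. \<chi> (x @ y)) (cube T N)"]
    by blast
  then obtain L where L: "is_line S M L" and eq: "\<And>a b. a \<in> S \<Longrightarrow> b \<in> S \<Longrightarrow>
      restrict (\<lambda>y. \<chi> (subst_c L a @ y)) (cube T N) = restrict (\<lambda>y. \<chi> (subst_c L b @ y)) (cube T N)"
    unfolding has_monochromatic_line_def by blast
  have "\<chi> (subst_c L a @ y) = \<chi> (subst_c L b @ y)" if "a \<in> S" "b \<in> S" "y \<in> cube T N" for a b y
    using fun_cong[OF eq[OF that(1,2)], of y] that(3) by simp
  with L show ?thesis by blast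
qed

lemma colour_focusing_step:
  fixes \<chi> :: "'a list \<Rightarrow> nat"
  assumes a0: "a0 \<in> S"
    and M: "hales_jewett S (cube (insert z S) N \<rightarrow>\<^sub>E {..<c}) M"
    and N: "\<And>\<chi> :: 'a list \<Rightarrow> nat. \<forall>w\<in>cube (insert z S) N. \<chi> w < c \<Longrightarrow>
      has_monochromatic_line (insert z S) N \<chi> \<or> (\<exists>f T. f \<in> cube (insert z S) N \<and> T \<subseteq> {..<c} \<and>
        card T = j \<and> focused_lines S z N \<chi> f T)"
    and bounded: "\<forall>w\<in>cube (insert z S) (M + N). \<chi> w < c"
  shows "has_monochromatic_line (insert z S) (M + N) \<chi> \<or>
    (\<exists>f T. f \<in> cube (insert z S) (M + N) \<and> T \<subseteq> {..<c} \<and>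
       card T = Suc j \<and> focused_lines S z (M + N) \<chi> f T)"
proof -
  let ?S' = "insert z S"
  obtain L where L: "is_line S M L" and uniform: "\<forall>a\<in>S. \<forall>b\<in>S. \<forall>y\<in>cube ?S' N.
      \<chi> (subst_c L a @ y) = \<chi> (subst_c L b @ y)"
    using line_uniform_on_suffixes[OF _ M bounded] by blast
  have L': "is_line ?S' M L" using L unfolding is_line_def by auto
  have La0: "subst_c L a0 \<in> cube ?S' M" using subst_c_line_in_cube[OF L'] a0 by blast
  define \<chi>0 where "\<chi>0 = (\<lambda>y. \<chi> (subst_c L a0 @ y))"
  have "\<forall>w\<in>cube ?S' N. \<chi>0 w < c" unfolding \<chi>0_def using bounded cube_append[OF La0] by blast
  from N[OF this] consider "has_monochromatic_line ?S' N \<chi>0"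
    | f T where "f \<in> cube ?S' N" "T \<subseteq> {..<c}" "card T = j" "focused_lines S z N \<chi>0 f T"
    by blast
  then show ?thesis
  proof cases
    case 1
    then show ?thesis using has_monochromatic_line_prefix[OF La0] unfolding \<chi>0_def by blast
  next
    case (2 f T)
    show ?thesis
    proof (cases "\<chi>0 f \<in> T")
      case True
      with 2(4) have "has_monochromatic_line ?S' N \<chi>0" by (rule has_monochromatic_line_if_focus_colour)
      then show ?thesis using has_monochromatic_line_prefix[OF La0] unfolding \<chi>0_def by blast
    next
      case False
      have "focused_lines S z (M + N) \<chi> (subst_c L z @ f) (insert (\<chi>0 f) T)"
        unfolding \<chi>0_def
        by (rule focused_lines_extend[OF L' a0 _ 2(1)])
           (use uniform a0 in blast, use 2(4) in \<open>simp add: \<chi>0_def\<close>)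
      moreover have "subst_c L z @ f \<in> cube ?S' (M + N)"
        using cube_append[OF subst_c_line_in_cube[OF L'] 2(1)] by simp
      moreover have "insert (\<chi>0 f) T \<subseteq> {..<c}"
        using 2(2) bounded cube_append[OF La0 2(1)] unfolding \<chi>0_def by auto
      moreover have "card (insert (\<chi>0 f) T) = Suc j"
        using False 2(2,3) finite_subset[OF 2(2)] by simp
      ultimately show ?thesis by blast
    qed
  qed
qed

lemma colour_focusing:
  assumes "finite S" and a0: "a0 \<in> S"
    and HJ: "\<And>C :: ('a list \<Rightarrow> nat) set. finite C \<Longrightarrow> \<exists>M. hales_jewett S C M"
    and "j \<le> c"
  shows "\<exists>N. \<forall>\<chi> :: 'a list \<Rightarrow> nat. (\<forall>w\<in>cube (insert z S) N. \<chi> w < c) \<longrightarrow>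
           has_monochromatic_line (insert z S) N \<chi> \<or>
           (\<exists>f T. f \<in> cube (insert z S) N \<and> T \<subseteq> {..<c} \<and> card T = j \<and> focused_lines S z N \<chi> f T)"
  using assms(4)
proof (induction j)
  case 0
  show ?case
    by (intro exI[of _ 0] allI impI disjI2 exI[of _ "[]"] exI[of _ "{}"])
       (simp add: cube_def focused_lines_def)
next
  case (Suc j)
  then obtain N where N: "\<And>\<chi> :: 'a list \<Rightarrow> nat. \<forall>w\<in>cube (insert z S) N. \<chi> w < c \<Longrightarrow>
      has_monochromatic_line (insert z S) N \<chi> \<or> (\<exists>f T. f \<in> cube (insert z S) N \<and> T \<subseteq> {..<c} \<and>
        card T = j \<and> focused_lines S z N \<chi> f T)"
    by auto
  have "finite (cube (insert z S) N \<rightarrow>\<^sub>E {..<c})" using assms(1) by (simp add: finite_PiE finite_cube)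
  with HJ obtain M where M: "hales_jewett S (cube (insert z S) N \<rightarrow>\<^sub>E {..<c}) M" by blast
  show ?case using colour_focusing_step[OF a0 M N] by blast
qed

lemma hales_jewett_exists:
  assumes "finite S" and "S \<noteq> {}" and "finite C"
  shows "\<exists>N. hales_jewett S C N"
proof -
  have "\<exists>N. hales_jewett S {..<c} N" for c :: nat
    using assms(1,2)
  proof (induction S arbitrary: c rule: finite_ne_induct)
    case (singleton z)
    show ?case by (rule exI, rule hales_jewett_singleton)
  next
    case (insert z S)
    obtain a0 where "a0 \<in> S" using insert.hyps(2) by blast
    from colour_focusing[OF insert.hyps(1) this hales_jewett_finite_colours[OF insert.IH] order_refl]
    obtain N where N: "\<And>\<chi> :: 'a list \<Rightarrow> nat. \<forall>w\<in>cube (insert z S) N. \<chi> w < c \<Longrightarrow>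
        has_monochromatic_line (insert z S) N \<chi> \<or> (\<exists>f T. f \<in> cube (insert z S) N \<and> T \<subseteq> {..<c} \<and>
          card T = c \<and> focused_lines S z N \<chi> f T)"
      by blast
    have "has_monochromatic_line (insert z S) N \<chi>" if bounded: "\<forall>w\<in>cube (insert z S) N. \<chi> w \<in> {..<c}" for \<chi>
    proof -
      from bounded have "\<forall>w\<in>cube (insert z S) N. \<chi> w < c" by simp
      from N[OF this] consider "has_monochromatic_line (insert z S) N \<chi>"
        | f T where "f \<in> cube (insert z S) N" "T \<subseteq> {..<c}" "card T = c" "focused_lines S z N \<chi> f T"
        by blast
      then show ?thesis
      proof cases
        case (2 f T)
        then have "T = {..<c}" by (simp add: card_subset_eq)
        with 2(1) bounded have "\<chi> f \<in> T" by blast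
        with 2(4) show ?thesis by (rule has_monochromatic_line_if_focus_colour)
      qed
    qed
    then show ?case unfolding hales_jewett_def by blast
  qed
  then show ?thesis using hales_jewett_finite_colours assms(3) by blast
qed

section \<open>Spans of sequences of variable words\<close>

definition cspan0 :: "(nat \<Rightarrow> 'a option list) \<Rightarrow> (nat \<Rightarrow> 'a set) \<Rightarrow> nat set \<Rightarrow> 'a list set" where
  "cspan0 s B I = {concat (map (\<lambda>(l, a). subst_c (s l) a) ps) | ps.
      sorted_wrt (<) (map fst ps) \<and> (\<forall>(l, a)\<in>set ps. l \<in> I \<and> a \<in> B l)}"

definition vblock :: "(nat \<Rightarrow> 'a option list) \<Rightarrow> nat \<Rightarrow> 'a option list \<Rightarrow> 'a option list" where
  "vblock s m d = concat (map (\<lambda>(l, c). subst_v (s l) c) (zip [m..<m + length d] d))"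

definition cblock :: "(nat \<Rightarrow> 'a option list) \<Rightarrow> nat \<Rightarrow> 'a list \<Rightarrow> 'a list" where
  "cblock s m e = concat (map (\<lambda>(l, a). subst_c (s l) a) (zip [m..<m + length e] e))"

lemma subst_c_vblock: "subst_c (vblock s m d) a = cblock s m (subst_c d a)"
  unfolding vblock_def cblock_def subst_c_concat subst_c_def[of d a]
  by (simp add: subst_c_subst_v zip_map2 comp_def case_prod_unfold)

lemma cspan0_Nil: "[] \<in> cspan0 s B I"
  unfolding cspan0_def by (intro CollectI exI[of _ "[]"]) simp

lemma cspan0_mono: "I \<subseteq> J \<Longrightarrow> cspan0 s B I \<subseteq> cspan0 s B J"
  unfolding cspan0_def by blast

lemma cspan0_append:
  assumes "x \<in> cspan0 s B I" and "y \<in> cspan0 s B J" and "\<And>i j. i \<in> I \<Longrightarrow> j \<in> J \<Longrightarrow> i < j"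
  shows "x @ y \<in> cspan0 s B (I \<union> J)"
proof -
  obtain ps qs where x: "x = concat (map (\<lambda>(l, a). subst_c (s l) a) ps)"
    and ps: "sorted_wrt (<) (map fst ps)" "\<forall>(l, a)\<in>set ps. l \<in> I \<and> a \<in> B l"
    and y: "y = concat (map (\<lambda>(l, a). subst_c (s l) a) qs)"
    and qs: "sorted_wrt (<) (map fst qs)" "\<forall>(l, a)\<in>set qs. l \<in> J \<and> a \<in> B l"
    using assms(1,2) unfolding cspan0_def by blast
  have "sorted_wrt (<) (map fst (ps @ qs))"
    using ps qs assms(3) by (fastforce simp: sorted_wrt_append)
  with ps(2) qs(2) show ?thesis
    unfolding cspan0_def x y by (intro CollectI exI[of _ "ps @ qs"]) auto
qed

lemma finite_cspan0:
  assumes "finite I" and "\<And>i. i \<in> I \<Longrightarrow> finite (B i)"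
  shows "finite (cspan0 s B I)"
proof -
  let ?PS = "{ps. sorted_wrt (<) (map fst ps) \<and> (\<forall>(l, a)\<in>set ps. l \<in> I \<and> a \<in> B l)}"
  have "set ps \<subseteq> Sigma I B \<and> length ps \<le> card I" if "ps \<in> ?PS" for ps
  proof
    from that have sorted: "sorted_wrt (<) (map fst ps)" and ps: "\<forall>(l, a)\<in>set ps. l \<in> I \<and> a \<in> B l"
      by auto
    then show "set ps \<subseteq> Sigma I B" by auto
    have "distinct (map fst ps)" using sorted strict_sorted_iff by blast
    then have "length ps = card (fst ` set ps)" by (metis distinct_card length_map set_map)
    also have "\<dots> \<le> card I" using ps assms(1) by (intro card_mono) auto
    finally show "length ps \<le> card I" .
  qed
  then have "?PS \<subseteq> {ps. set ps \<subseteq> Sigma I B \<and> length ps \<le> card I}" by blast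
  moreover have "finite (Sigma I B)" using assms by blast
  ultimately have "finite ?PS" using finite_subset finite_lists_length_le by blast
  then show ?thesis unfolding cspan0_def by (simp add: setcompr_eq_image)
qed

lemma cspan_last_block:
  assumes "z \<in> cspan s B I"
  shows "\<exists>x l a. z = x @ subst_c (s l) a \<and> l \<in> I \<and> a \<in> B l \<and> x \<in> cspan0 s B {..<l}"
proof -
  obtain ps where z: "z = concat (map (\<lambda>(l, a). subst_c (s l) a) ps)" and "ps \<noteq> []"
    and sorted: "sorted_wrt (<) (map fst ps)" and ps: "\<forall>(l, a)\<in>set ps. l \<in> I \<and> a \<in> B l"
    using assms unfolding cspan_def by blast
  then obtain qs l a where qs: "ps = qs @ [(l, a)]" by (metis rev_exhaust surj_pair)
  have "concat (map (\<lambda>(l, a). subst_c (s l) a) qs) \<in> cspan0 s B {..<l}"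
    using sorted ps unfolding qs cspan0_def by (intro CollectI exI[of _ qs]) (auto simp: sorted_wrt_append)
  with ps show ?thesis unfolding z qs by auto
qed

lemma vspan_mono: "I \<subseteq> J \<Longrightarrow> vspan s B I \<subseteq> vspan s B J"
  unfolding vspan_def by blast

lemma cspan0_append_vspan:
  assumes "x \<in> cspan0 s B I" and "w \<in> vspan s B J" and "\<And>i j. i \<in> I \<Longrightarrow> j \<in> J \<Longrightarrow> i < j"
  shows "map Some x @ w \<in> vspan s B (I \<union> J)"
proof -
  obtain qs where x: "x = concat (map (\<lambda>(l, a). subst_c (s l) a) qs)"
    and qs: "sorted_wrt (<) (map fst qs)" "\<forall>(l, a)\<in>set qs. l \<in> I \<and> a \<in> B l"
    using assms(1) unfolding cspan0_def by blast
  obtain ps where w: "w = concat (map (\<lambda>(l, c). subst_v (s l) c) ps)" and "ps \<noteq> []"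
    and ps: "sorted_wrt (<) (map fst ps)" "\<forall>(l, c)\<in>set ps. l \<in> J \<and> c \<in> insert None (Some ` B l)"
    and var: "\<exists>l. (l, None) \<in> set ps"
    using assms(2) unfolding vspan_def by blast
  define rs where "rs = map (\<lambda>(l, a). (l, Some a)) qs @ ps"
  have "map fst rs = map fst qs @ map fst ps" unfolding rs_def by (induct qs) auto
  then have "sorted_wrt (<) (map fst rs)"
    using qs ps assms(3) by (fastforce simp: sorted_wrt_append)
  moreover have "map Some x @ w = concat (map (\<lambda>(l, c). subst_v (s l) c) rs)"
    unfolding x w rs_def by (simp add: map_concat subst_v_Some case_prod_unfold comp_def)
  ultimately show ?thesis
    using \<open>ps \<noteq> []\<close> qs(2) ps(2) var unfolding vspan_def rs_def
    by (intro CollectI exI[of _ rs]) (auto simp: rs_def)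
qed

lemma subst_c_vspan_in_cspan0:
  assumes mono: "\<And>i j. i \<le> j \<Longrightarrow> B i \<subseteq> B j" and "w \<in> vspan s B I" and a: "a \<in> B l"
    and below: "\<And>i. i \<in> I \<Longrightarrow> l \<le> i"
  shows "subst_c w a \<in> cspan0 s B I"
proof -
  obtain ps where w: "w = concat (map (\<lambda>(l, c). subst_v (s l) c) ps)"
    and sorted: "sorted_wrt (<) (map fst ps)"
    and ps: "\<forall>(l, c)\<in>set ps. l \<in> I \<and> c \<in> insert None (Some ` B l)"
    using assms(2) unfolding vspan_def by blast
  define qs where "qs = map (\<lambda>(j, c). (j, case c of None \<Rightarrow> a | Some b \<Rightarrow> b)) ps"
  have "map fst qs = map fst ps" unfolding qs_def by (induct ps) auto
  with sorted have "sorted_wrt (<) (map fst qs)" by simp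
  moreover have "j \<in> I \<and> b \<in> B j" if "(j, b) \<in> set qs" for j b
  proof -
    from that obtain c where jc: "(j, c) \<in> set ps" and b: "b = (case c of None \<Rightarrow> a | Some b \<Rightarrow> b)"
      unfolding qs_def by auto
    then have "j \<in> I" using ps by auto
    moreover have "b \<in> B j"
      using b jc ps a mono[OF below[OF \<open>j \<in> I\<close>]] by (cases c) auto
    ultimately show ?thesis ..
  qed
  moreover have "subst_c w a = concat (map (\<lambda>(j, b). subst_c (s j) b) qs)"
    unfolding w qs_def by (simp add: subst_c_concat subst_c_subst_v comp_def case_prod_unfold)
  ultimately show ?thesis unfolding cspan0_def by (intro CollectI exI[of _ qs]) auto
qed

lemma vblock_in_vspan:
  assumes mono: "\<And>i j. i \<le> j \<Longrightarrow> B i \<subseteq> B j"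
    and "None \<in> set d" and letters: "set d \<subseteq> insert None (Some ` B m)"
  shows "vblock s m d \<in> vspan s B {m..<m + length d}"
proof -
  let ?ps = "zip [m..<m + length d] d"
  have "map fst ?ps = [m..<m + length d]" by simp
  then have "sorted_wrt (<) (map fst ?ps)" by (simp add: sorted_wrt_upt)
  moreover obtain i where "i < length d" "d ! i = None"
    using assms(2) by (auto simp: in_set_conv_nth)
  then have "(m + i, None) \<in> set ?ps" by (force simp: set_zip)
  moreover have "l \<in> {m..<m + length d} \<and> c \<in> insert None (Some ` B l)" if "(l, c) \<in> set ?ps" for l c
  proof -
    from that obtain i where i: "i < length d" "l = m + i" "c = d ! i" by (auto simp: set_zip)
    have "c \<in> insert None (Some ` B m)" using subsetD[OF letters nth_mem[OF i(1)]] i(3) by simp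
    moreover have "B m \<subseteq> B l" using mono i(2) by simp
    ultimately show ?thesis using i by auto
  qed
  moreover have "?ps \<noteq> []" using assms(2) by (cases d) auto
  ultimately show ?thesis unfolding vspan_def vblock_def by blast
qed

lemma vspan_varword:
  assumes s: "is_varseq A s" and B: "\<And>n. B n \<subseteq> alphabet A" and "w \<in> vspan s B I"
  shows "is_varword A w"
proof -
  obtain ps where w: "w = concat (map (\<lambda>(l, c). subst_v (s l) c) ps)"
    and ps: "\<forall>(l, c)\<in>set ps. l \<in> I \<and> c \<in> insert None (Some ` B l)"
    and "\<exists>l. (l, None) \<in> set ps"
    using assms(3) unfolding vspan_def by blast
  then obtain l0 where l0: "(l0, None) \<in> set ps" by blast
  have "None \<in> set (s l0)" using s unfolding is_varseq_def is_varword_def by blast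
  then have "None \<in> set (subst_v (s l0) None)" unfolding subst_v_def by force
  then have "None \<in> set w" unfolding w using l0 by force
  moreover have "a \<in> alphabet A" if "Some a \<in> set w" for a
  proof -
    from that obtain l c y where lc: "(l, c) \<in> set ps" and y: "y \<in> set (s l)"
      and ya: "Some a = (case y of None \<Rightarrow> c | Some b \<Rightarrow> Some b)"
      unfolding w subst_v_def by auto
    show ?thesis
    proof (cases y)
      case None
      with ya lc ps B show ?thesis by force
    next
      case (Some b)
      with ya y s show ?thesis unfolding is_varseq_def is_varword_def by auto
    qed
  qed
  ultimately show ?thesis unfolding is_varword_def by blast
qed

section \<open>Blocks avoiding a set of words\<close>

lemma avoiding_block_exists:
  fixes B :: "nat \<Rightarrow> 'a set"
  assumes mono: "\<And>i j. i \<le> j \<Longrightarrow> B i \<subseteq> B j" and fin: "\<And>n. finite (B n)" and "B 0 \<noteq> {}"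
    and no_line: "\<And>m w. w \<in> vspan s B {0..m} \<Longrightarrow> \<exists>a\<in>B 0. subst_c w a \<notin> E"
  shows "\<exists>m' w. m < m' \<and> w \<in> vspan s B {m..<m'} \<and>
           (\<forall>p\<in>cspan0 s B {..<m}. \<forall>a\<in>B m. p @ subst_c w a \<notin> E)"
proof -
  define P where "P = cspan0 s B {..<m} \<times> B m"
  have "finite P" unfolding P_def using finite_cspan0 fin by blast
  define \<chi> where "\<chi> d = {(p, a)\<in>P. p @ cblock s m (a # d) \<in> E}" for d
  obtain N where "hales_jewett (B 0) (Pow P) N"
    using hales_jewett_exists[OF fin \<open>B 0 \<noteq> {}\<close>] \<open>finite P\<close> by blast
  moreover have "\<forall>d\<in>cube (B 0) N. \<chi> d \<in> Pow P" unfolding \<chi>_def by blast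
  ultimately have "has_monochromatic_line (B 0) N \<chi>" unfolding hales_jewett_def by blast
  then obtain v where v: "is_line (B 0) N v"
    and same: "\<And>a b. a \<in> B 0 \<Longrightarrow> b \<in> B 0 \<Longrightarrow> \<chi> (subst_c v a) = \<chi> (subst_c v b)"
    unfolding has_monochromatic_line_def by blast
  obtain b0 where b0: "b0 \<in> B 0" using \<open>B 0 \<noteq> {}\<close> by blast
  have B0: "B 0 \<subseteq> B m" using mono by simp
  have v_letters: "set v \<subseteq> insert None (Some ` B m)"
  proof
    fix c assume "c \<in> set v"
    with v B0 show "c \<in> insert None (Some ` B m)" unfolding is_line_def by (cases c) auto
  qed
  define d0 where "d0 = None # map Some (subst_c v b0)"
  define w where "w = vblock s m d0"
  have "w \<in> vspan s B {m..<m + length d0}"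
    unfolding w_def using subst_c_line_in_cube[OF v b0] B0
    by (intro vblock_in_vspan[OF mono]) (auto simp: d0_def cube_def)
  moreover have "p @ subst_c w a \<notin> E" if p: "p \<in> cspan0 s B {..<m}" and a: "a \<in> B m" for p a
  proof
    assume "p @ subst_c w a \<in> E"
    then have in_b0: "(p, a) \<in> \<chi> (subst_c v b0)"
      unfolding \<chi>_def P_def w_def d0_def using p a by (simp add: subst_c_vblock)
    define u where "u = map Some p @ vblock s m (Some a # v)"
    have "u \<in> vspan s B ({..<m} \<union> {m..<m + length (Some a # v)})"
      unfolding u_def using v a v_letters
      by (intro cspan0_append_vspan[OF p vblock_in_vspan[OF mono]]) (auto simp: is_line_def)
    moreover have "{..<m} \<union> {m..<m + length (Some a # v)} \<subseteq> {0..m + N}"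
      using v by (auto simp: is_line_def)
    ultimately have "u \<in> vspan s B {0..m + N}" using vspan_mono by blast
    then obtain b where b: "b \<in> B 0" and "subst_c u b \<notin> E" using no_line by blast
    then have "(p, a) \<notin> \<chi> (subst_c v b)" unfolding \<chi>_def u_def by (simp add: subst_c_vblock)
    with in_b0 same[OF b b0] show False by simp
  qed
  ultimately show ?thesis by (intro exI[of _ "m + length d0"] exI[of _ w]) (simp add: d0_def)
qed

lemma increasing_chain_exists:
  assumes "\<And>m. \<exists>m' x. m < m' \<and> P m m' x"
  shows "\<exists>ms xs. ms 0 = 0 \<and> (\<forall>n. ms n < ms (Suc n) \<and> P (ms n) (ms (Suc n)) (xs n))"
proof -
  have "\<exists>y. m < fst y \<and> P m (fst y) (snd y)" for m
  proof -
    obtain m' x where "m < m'" "P m m' x" using assms by blast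
    then show ?thesis by (intro exI[of _ "(m', x)"]) simp
  qed
  then obtain f where f: "\<And>m. m < fst (f m) \<and> P m (fst (f m)) (snd (f m))" by metis
  define ms where "ms n = ((fst \<circ> f) ^^ n) 0" for n
  show ?thesis by (rule exI[of _ ms], rule exI[of _ "\<lambda>n. snd (f (ms n))"]) (simp add: ms_def f)
qed

lemma cspan0_of_blocks:
  assumes mono: "\<And>i j. i \<le> j \<Longrightarrow> B i \<subseteq> B j" and ms: "strict_mono ms"
    and w: "\<And>n. w n \<in> vspan s B {ms n..<ms (Suc n)}"
  shows "cspan0 w B {..<l} \<subseteq> cspan0 s B {..<ms l}"
proof
  fix x assume "x \<in> cspan0 w B {..<l}"
  then obtain ps where x: "x = concat (map (\<lambda>(j, a). subst_c (w j) a) ps)"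
    and "sorted_wrt (<) (map fst ps)" and "\<forall>(j, a)\<in>set ps. j \<in> {..<l} \<and> a \<in> B j"
    unfolding cspan0_def by blast
  then show "x \<in> cspan0 s B {..<ms l}"
  proof (induction ps arbitrary: x l rule: rev_induct)
    case Nil
    then show ?case by (simp add: cspan0_Nil)
  next
    case (snoc q ps)
    obtain j a where q: "q = (j, a)" by fastforce
    have sorted: "sorted_wrt (<) (map fst ps)" and lt: "\<forall>(i, b)\<in>set ps. i < j"
      using snoc.prems(2) unfolding q by (auto simp: sorted_wrt_append)
    have "j < l" and a: "a \<in> B j" and letters: "\<forall>(i, b)\<in>set ps. b \<in> B i"
      using snoc.prems(3) unfolding q by auto
    have "\<forall>(i, b)\<in>set ps. i \<in> {..<j} \<and> b \<in> B i" using lt letters by auto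
    from snoc.IH[OF refl sorted this]
    have prefix: "concat (map (\<lambda>(j, a). subst_c (w j) a) ps) \<in> cspan0 s B {..<ms j}" .
    have "j \<le> ms j" using ms strict_mono_imp_increasing by blast
    then have block: "subst_c (w j) a \<in> cspan0 s B {ms j..<ms (Suc j)}"
      by (intro subst_c_vspan_in_cspan0[OF mono w a]) auto
    have "x = concat (map (\<lambda>(j, a). subst_c (w j) a) ps) @ subst_c (w j) a"
      using snoc.prems(1) q by simp
    also have "\<dots> \<in> cspan0 s B ({..<ms j} \<union> {ms j..<ms (Suc j)})"
      by (rule cspan0_append[OF prefix block]) auto
    also have "\<dots> \<subseteq> cspan0 s B {..<ms l}"
      using strict_monoD[OF ms, of j "Suc j"] strict_mono_less_eq[OF ms, of "Suc j" l] \<open>j < l\<close>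
      by (intro cspan0_mono) auto
    finally show ?case .
  qed
qed

lemma cspan_avoiding_blocks_disjoint:
  assumes mono: "\<And>i j. i \<le> j \<Longrightarrow> B i \<subseteq> B j" and ms: "strict_mono ms"
    and w: "\<And>n. w n \<in> vspan s B {ms n..<ms (Suc n)}"
    and avoid: "\<And>n p a. p \<in> cspan0 s B {..<ms n} \<Longrightarrow> a \<in> B (ms n) \<Longrightarrow> p @ subst_c (w n) a \<notin> E"
  shows "E \<inter> cspan w B UNIV = {}"
proof -
  have "z \<notin> E" if z: "z \<in> cspan w B UNIV" for z
  proof -
    obtain x l a where z: "z = x @ subst_c (w l) a" and a: "a \<in> B l" and x: "x \<in> cspan0 w B {..<l}"
      using cspan_last_block[OF z] by blast
    have "x \<in> cspan0 s B {..<ms l}" using cspan0_of_blocks[OF mono ms w] x by blast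
    moreover have "a \<in> B (ms l)" using a mono[OF strict_mono_imp_increasing[OF ms]] by blast
    ultimately show ?thesis unfolding z by (rule avoid)
  qed
  then show ?thesis by blast
qed

theorem fact3p7:
  fixes A :: "nat \<Rightarrow> 'a set" and k :: nat and E :: "'a list set"
    and s :: "nat \<Rightarrow> 'a option list"
  assumes "\<And>n. A n \<subseteq> A (Suc n)" and "\<And>n. finite (A n)" and "\<And>n. A n \<noteq> {}"
    and "E \<subseteq> words A" and "is_varseq A s" and "k_large A k E s"
  shows "\<exists>m w. w \<in> vspan s (\<lambda>n. A (k + n)) {0..m} \<and> (\<lambda>a. subst_c w a) ` A k \<subseteq> E"
proof (rule ccontr)
  let ?B = "\<lambda>n. A (k + n)"
  have mono: "\<And>i j. i \<le> j \<Longrightarrow> ?B i \<subseteq> ?B j" using lift_Suc_mono_le[of A, OF assms(1)] by simp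
  assume "\<not> ?thesis"
  then have no_line: "\<And>m w. w \<in> vspan s ?B {0..m} \<Longrightarrow> \<exists>a\<in>?B 0. subst_c w a \<notin> E" by auto
  have "\<exists>m' w. m < m' \<and> w \<in> vspan s ?B {m..<m'} \<and>
          (\<forall>p\<in>cspan0 s ?B {..<m}. \<forall>a\<in>?B m. p @ subst_c w a \<notin> E)" for m
    by (rule avoiding_block_exists[where B = ?B]) (fact mono, fact assms(2), simp add: assms(3), fact no_line)
  from increasing_chain_exists[OF this] obtain ms w where "ms 0 = 0"
    and chain: "\<And>n. ms n < ms (Suc n) \<and> w n \<in> vspan s ?B {ms n..<ms (Suc n)} \<and>
      (\<forall>p\<in>cspan0 s ?B {..<ms n}. \<forall>a\<in>?B (ms n). p @ subst_c (w n) a \<notin> E)"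
    by blast
  then have ms: "\<And>n. ms n < ms (Suc n)" and w: "\<And>n. w n \<in> vspan s ?B {ms n..<ms (Suc n)}"
    and avoid: "\<And>n p a. p \<in> cspan0 s ?B {..<ms n} \<Longrightarrow> a \<in> ?B (ms n) \<Longrightarrow> p @ subst_c (w n) a \<notin> E"
    by blast+
  have strict: "strict_mono ms" using ms by (simp add: strict_mono_Suc_iff)
  have "is_varseq A w"
    unfolding is_varseq_def using vspan_varword[OF assms(5) _ w] by (auto simp: alphabet_def)
  moreover have "extracted A k w s" unfolding extracted_def using \<open>ms 0 = 0\<close> ms w by blast
  ultimately have "E \<inter> cspan w ?B UNIV \<noteq> {}" using assms(6) unfolding k_large_def by blast
  moreover have "E \<inter> cspan w ?B UNIV = {}"
    by (rule cspan_avoiding_blocks_disjoint[where B = ?B and ms = ms and w = w, OF mono strict w avoid])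
  ultimately show False by blast
qed

end
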